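(* Let $P$ and $Q$ be $[0,1]$-valued random variables, where under the null hypothesis $H_0$, $P$ is a valid p-value ($\Pr(P\le s)\le s$ for all $s\in[0,1]$) and $Q$ has density $f$ on $[0,1]$. Let $\ell_f := \inf_{q \in [0,1]} f(q)$ and $\eta \in [0,1]$. Let $T\in\{0,1\}$ be such that, conditionally on $(Q,P)$, $T \sim \mathrm{Bern}\big(1 - \eta \ell_f / f(Q)\big)$, and define $$\tilde P^{\mathrm{density}} := T\,P + (1-T)\,Q.$$ Then, under $H_0$, for every $s\in[0,1]$, $$\Pr(\tilde P^{\mathrm{density}} \le s) = \Pr(P \le s) + \eta \ell_f\Big(s - \int_0^1 \Pr(P \le s \mid Q = q)\, dq\Big).$$ Consequently, when $P$ and $Q$ are independent, $\tilde P^{\mathrm{density}}$ is a valid p-value, and it is exactly $\mathrm{Uniform}[0,1]$ if $P$ is exactly $\mathrm{Uniform}[0,1]$, regardless of the distribution of $Q$.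
   Context: $T$ is drawn based on $Q$ using additional independent randomness. $Q$ is a "proxy" p-value with no validity assumption; its null density $f$ is assumed known. *)

theory Defs
  imports "HOL-Probability.Probability"
begin

definition lowf :: "(real \<Rightarrow> real) \<Rightarrow> real" where
  "lowf f = (INF q\<in>{0..1}. f q)"

end

theory Submission
  imports Defs
begin

(* Given (Q, P), T = 0 with probability w = \<eta> lowf f / f Q \<in> [0, 1], so
   Pr(T = 1, (Q, P) \<in> C) = Pr((Q, P) \<in> C) - E[w 1_C(Q, P)], and splitting on T gives
     Pr(Ptilde \<le> s) = Pr(P \<le> s) + E[w 1{Q \<le> s}] - E[w 1{P \<le> s}].
   The weight is chosen so that f q * w = \<eta> lowf f for all q \<in> [0, 1], including where f q = 0
   (then lowf f = 0 as well). Integrating against the sub-density of Q on {Q \<le> s}, resp. {P \<le> s},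
   turns the two expectations into \<eta> lowf f s and \<eta> lowf f \<integral>_[0,1] g s. Under independence
   the latter sub-density is Pr(P \<le> s) f, so Pr(Ptilde \<le> s) = c + \<eta> lowf f (s - c) with
   c = Pr(P \<le> s); validity and uniformity follow from 0 \<le> \<eta> lowf f \<le> \<integral>_[0,1] f = 1. *)

lemma distributed_on_set_real:
  "distributed M N X (\<lambda>x. ennreal (f x) * indicator S x)
    \<longleftrightarrow> distributed M N X (\<lambda>x. ennreal (f x * indicator S x))"
proof -
  have "(\<lambda>x. ennreal (f x) * indicator S x) = (\<lambda>x. ennreal (f x * indicator S x))"
    by (auto split: split_indicator)
  then show ?thesis by simp
qed

lemma measure_distributed_on_set:
  fixes Q :: "'a \<Rightarrow> real"
  assumes Q: "distributed M lborel Q (\<lambda>q. ennreal (f q) * indicator S q)"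
    and f_nonneg: "\<And>q. f q \<ge> 0"
    and B: "B \<in> sets borel"
  shows "measure M {\<omega> \<in> space M. Q \<omega> \<in> B} = (\<integral>q\<in>B \<inter> S. f q \<partial>lborel)"
proof -
  have Q': "distributed M lborel Q (\<lambda>q. ennreal (f q * indicator S q))"
    using Q by (simp only: distributed_on_set_real)
  note [measurable] = distributed_measurable[OF Q] B
  have "measure M {\<omega> \<in> space M. Q \<omega> \<in> B} = (\<integral>\<omega>. indicator B (Q \<omega>) \<partial>M)"
    by (simp add: indicator_vimage[symmetric] vimage_def Int_def conj_commute)
  also have "\<dots> = (\<integral>q. f q * indicator S q * indicator B q \<partial>lborel)"
    using f_nonneg by (intro distributed_integral[OF Q', symmetric]) auto
  also have "\<dots> = (\<integral>q\<in>B \<inter> S. f q \<partial>lborel)"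
    unfolding set_lebesgue_integral_def
    by (intro Bochner_Integration.integral_cong) (auto split: split_indicator)
  finally show ?thesis .
qed

lemma set_integrable_distributed_on_set:
  fixes Q :: "'a \<Rightarrow> real"
  assumes M: "finite_measure M"
    and Q: "distributed M lborel Q (\<lambda>q. ennreal (f q) * indicator S q)"
    and f_nonneg: "\<And>q. f q \<ge> 0"
  shows "set_integrable lborel S f"
proof -
  have Q': "distributed M lborel Q (\<lambda>q. ennreal (f q * indicator S q))"
    using Q by (simp only: distributed_on_set_real)
  have "integrable lborel (\<lambda>q. f q * indicator S q * 1)"
    using f_nonneg M by (subst distributed_integrable[OF Q']) (auto simp: finite_measure.integrable_const)
  then show ?thesis
    unfolding set_integrable_def by (simp add: mult.commute)
qed

lemma borel_measurable_distributed_on_set: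
  assumes "distributed M lborel Q (\<lambda>q. ennreal (f q) * indicator S q)" and "\<And>q. f q \<ge> 0"
  shows "(\<lambda>q. f q * indicator S q) \<in> borel_measurable borel"
  using assms distributed_real_measurable[of lborel "\<lambda>q. f q * indicator S q"]
  by (simp add: distributed_on_set_real)

lemma integral_event_density:
  fixes Q :: "'a \<Rightarrow> real" and D h :: "real \<Rightarrow> real"
  assumes M: "finite_measure M" and A[measurable]: "A \<in> sets M"
    and Q[measurable]: "Q \<in> borel_measurable M"
    and D[measurable]: "D \<in> borel_measurable borel" and D_nonneg: "\<And>q. D q \<ge> 0"
    and D_int: "integrable lborel D"
    and event_density: "\<And>B. B \<in> sets borel \<Longrightarrow>
      measure M {\<omega> \<in> space M. \<omega> \<in> A \<and> Q \<omega> \<in> B} = (\<integral>q\<in>B. D q \<partial>lborel)"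
    and h[measurable]: "h \<in> borel_measurable borel"
  shows "(\<integral>\<omega>. indicator A \<omega> * h (Q \<omega>) \<partial>M) = (\<integral>q. D q * h q \<partial>lborel)"
proof -
  define MA where "MA = density M (\<lambda>\<omega>. ennreal (indicator A \<omega>))"
  have "distr MA lborel Q = density lborel D"
  proof (rule measure_eqI)
    fix B assume "B \<in> sets (distr MA lborel Q)"
    then have B[measurable]: "B \<in> sets borel" by simp
    have "emeasure (distr MA lborel Q) B
        = (\<integral>\<^sup>+\<omega>. ennreal (indicator A \<omega>) * indicator (Q -` B \<inter> space M) \<omega> \<partial>M)"
      unfolding MA_def by (simp add: emeasure_distr emeasure_density)
    also have "\<dots> = (\<integral>\<^sup>+\<omega>. indicator {\<omega> \<in> space M. \<omega> \<in> A \<and> Q \<omega> \<in> B} \<omega> \<partial>M)"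
      by (intro nn_integral_cong) (auto split: split_indicator)
    also have "\<dots> = emeasure M {\<omega> \<in> space M. \<omega> \<in> A \<and> Q \<omega> \<in> B}"
      by (intro nn_integral_indicator) measurable
    also have "\<dots> = ennreal (\<integral>q\<in>B. D q \<partial>lborel)"
      using M by (simp add: finite_measure.emeasure_eq_measure event_density)
    also have "\<dots> = (\<integral>\<^sup>+q. ennreal (D q) * indicator B q \<partial>lborel)"
      using D_nonneg by (simp add: nn_set_integral_eq_set_integral[OF D_int])
    also have "\<dots> = emeasure (density lborel D) B"
      by (simp add: emeasure_density)
    finally show "emeasure (distr MA lborel Q) B = emeasure (density lborel D) B" .
  qed simp
  then have "distributed MA lborel Q D"
    unfolding distributed_def MA_def by simp
  then have "(\<integral>\<omega>. h (Q \<omega>) \<partial>MA) = (\<integral>q. D q * h q \<partial>lborel)"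
    using D_nonneg by (intro distributed_integral[symmetric]) auto
  then show ?thesis
    unfolding MA_def by (simp add: integral_real_density)
qed

lemma (in prob_space) prob_indep_var_conj:
  assumes "indep_var borel X borel Y" and "A \<in> sets borel" and "B \<in> sets borel"
  shows "prob {\<omega> \<in> space M. X \<omega> \<in> A \<and> Y \<omega> \<in> B}
    = prob {\<omega> \<in> space M. X \<omega> \<in> A} * prob {\<omega> \<in> space M. Y \<omega> \<in> B}"
  using indep_varD[OF assms] by (simp add: vimage_def Int_def conj_commute)

lemma measure_mixture_le:
  fixes P Q T :: "'a \<Rightarrow> real"
  assumes M: "finite_measure M"
    and [measurable]: "P \<in> borel_measurable M" "Q \<in> borel_measurable M" "T \<in> borel_measurable M"
    and T_range: "\<And>\<omega>. \<omega> \<in> space M \<Longrightarrow> T \<omega> \<in> {0, 1}"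
  shows "measure M {\<omega> \<in> space M. T \<omega> * P \<omega> + (1 - T \<omega>) * Q \<omega> \<le> s}
    = measure M {\<omega> \<in> space M. T \<omega> = 1 \<and> P \<omega> \<le> s} + measure M {\<omega> \<in> space M. Q \<omega> \<le> s}
      - measure M {\<omega> \<in> space M. T \<omega> = 1 \<and> Q \<omega> \<le> s}"
proof -
  let ?Q0 = "{\<omega> \<in> space M. T \<omega> \<noteq> 1 \<and> Q \<omega> \<le> s}"
  have "{\<omega> \<in> space M. T \<omega> * P \<omega> + (1 - T \<omega>) * Q \<omega> \<le> s}
      = {\<omega> \<in> space M. T \<omega> = 1 \<and> P \<omega> \<le> s} \<union> ?Q0"
    using T_range by fastforce
  then have mix: "measure M {\<omega> \<in> space M. T \<omega> * P \<omega> + (1 - T \<omega>) * Q \<omega> \<le> s}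
      = measure M {\<omega> \<in> space M. T \<omega> = 1 \<and> P \<omega> \<le> s} + measure M ?Q0"
    using M by (simp add: finite_measure.finite_measure_Union disjoint_iff)
  have "{\<omega> \<in> space M. Q \<omega> \<le> s} = {\<omega> \<in> space M. T \<omega> = 1 \<and> Q \<omega> \<le> s} \<union> ?Q0"
    by auto
  then have "measure M {\<omega> \<in> space M. Q \<omega> \<le> s}
      = measure M {\<omega> \<in> space M. T \<omega> = 1 \<and> Q \<omega> \<le> s} + measure M ?Q0"
    using M by (simp add: finite_measure.finite_measure_Union disjoint_iff)
  with mix show ?thesis by simp
qed

lemma measure_thinned_event:
  fixes X :: "'a \<Rightarrow> 'b::topological_space" and T w :: "'a \<Rightarrow> real"
  assumes M: "prob_space M" and [measurable]: "X \<in> borel_measurable M" "w \<in> borel_measurable M"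
    and w_range: "\<And>\<omega>. \<omega> \<in> space M \<Longrightarrow> w \<omega> \<in> {0..1}"
    and T_cond: "\<And>C. C \<in> sets borel \<Longrightarrow> measure M {\<omega> \<in> space M. T \<omega> = 1 \<and> X \<omega> \<in> C}
      = (\<integral>\<omega>. (1 - w \<omega>) * indicator C (X \<omega>) \<partial>M)"
    and C[measurable]: "C \<in> sets borel"
  shows "measure M {\<omega> \<in> space M. T \<omega> = 1 \<and> X \<omega> \<in> C}
    = measure M {\<omega> \<in> space M. X \<omega> \<in> C} - (\<integral>\<omega>. indicator {\<omega> \<in> space M. X \<omega> \<in> C} \<omega> * w \<omega> \<partial>M)"
proof -
  interpret prob_space M by (rule M)
  let ?E = "{\<omega> \<in> space M. X \<omega> \<in> C}"
  have [measurable]: "?E \<in> sets M"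
    by measurable
  have int_E: "integrable M (\<lambda>\<omega>. indicator ?E \<omega> :: real)"
    and int_wE: "integrable M (\<lambda>\<omega>. indicator ?E \<omega> * w \<omega>)"
    using w_range by (intro integrable_const_bound[where B=1]; auto split: split_indicator)+
  have "measure M {\<omega> \<in> space M. T \<omega> = 1 \<and> X \<omega> \<in> C}
      = (\<integral>\<omega>. indicator ?E \<omega> - indicator ?E \<omega> * w \<omega> \<partial>M)"
    unfolding T_cond[OF C]
    by (intro Bochner_Integration.integral_cong) (auto split: split_indicator)
  also have "\<dots> = measure M ?E - (\<integral>\<omega>. indicator ?E \<omega> * w \<omega> \<partial>M)"
    using int_E int_wE by (subst Bochner_Integration.integral_diff) (auto simp: Int_absorb2)
  finally show ?thesis .
qed

lemma measure_randomized_mixture_le: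
  fixes P Q T w :: "'a \<Rightarrow> real"
  assumes M: "prob_space M"
    and [measurable]: "P \<in> borel_measurable M" "Q \<in> borel_measurable M" "T \<in> borel_measurable M"
    and T_range: "\<And>\<omega>. \<omega> \<in> space M \<Longrightarrow> T \<omega> \<in> {0, 1}"
    and [measurable]: "w \<in> borel_measurable M" and w_range: "\<And>\<omega>. \<omega> \<in> space M \<Longrightarrow> w \<omega> \<in> {0..1}"
    and T_cond: "\<And>C. C \<in> sets (borel :: (real \<times> real) measure) \<Longrightarrow>
      measure M {\<omega> \<in> space M. T \<omega> = 1 \<and> (Q \<omega>, P \<omega>) \<in> C}
      = (\<integral>\<omega>. (1 - w \<omega>) * indicator C (Q \<omega>, P \<omega>) \<partial>M)"
  shows "measure M {\<omega> \<in> space M. T \<omega> * P \<omega> + (1 - T \<omega>) * Q \<omega> \<le> s}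
    = measure M {\<omega> \<in> space M. P \<omega> \<le> s}
      + (\<integral>\<omega>. indicator {\<omega> \<in> space M. Q \<omega> \<le> s} \<omega> * w \<omega> \<partial>M)
      - (\<integral>\<omega>. indicator {\<omega> \<in> space M. P \<omega> \<le> s} \<omega> * w \<omega> \<partial>M)"
proof -
  interpret prob_space M by (rule M)
  have thinned: "measure M {\<omega> \<in> space M. T \<omega> = 1 \<and> (Q \<omega>, P \<omega>) \<in> C}
      = measure M {\<omega> \<in> space M. (Q \<omega>, P \<omega>) \<in> C}
        - (\<integral>\<omega>. indicator {\<omega> \<in> space M. (Q \<omega>, P \<omega>) \<in> C} \<omega> * w \<omega> \<partial>M)"
    if "C \<in> sets borel" for C
    using measure_thinned_event[OF M _ _ w_range T_cond that] by simp
  have "{x :: real \<times> real. snd x \<le> s} \<in> sets borel" "{x :: real \<times> real. fst x \<le> s} \<in> sets borel"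
    by (intro borel_closed closed_Collect_le continuous_intros)+
  from this[THEN thinned] show ?thesis
    using measure_mixture_le[OF finite_measure _ _ _ T_range, where s = s] by simp
qed

lemma lowf_le:
  assumes "\<And>q. f q \<ge> 0" and "q \<in> {0..1}"
  shows "lowf f \<le> f q"
  unfolding lowf_def using assms by (intro cINF_lower) (auto simp: bdd_below_def)

lemma lowf_nonneg:
  assumes "\<And>q. f q \<ge> 0"
  shows "0 \<le> lowf f"
  unfolding lowf_def using assms by (intro cINF_greatest) auto

lemma mult_lowf_weight:
  assumes f_nonneg: "\<And>q. f q \<ge> 0" and q: "q \<in> {0..1}"
  shows "f q * (c * lowf f / f q) = c * lowf f"
proof (cases "f q = 0")
  case True
  then have "lowf f = 0" using lowf_le[of f, OF f_nonneg q] lowf_nonneg[of f, OF f_nonneg] by simp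
  then show ?thesis by simp
qed simp

lemma lowf_weight_range:
  assumes f_nonneg: "\<And>q. f q \<ge> 0" and q: "q \<in> {0..1}" and \<eta>: "\<eta> \<in> {0..1}"
  shows "\<eta> * lowf f / f q \<in> {0..1}"
proof -
  have "0 \<le> lowf f" "lowf f \<le> f q"
    using lowf_nonneg[of f, OF f_nonneg] lowf_le[of f, OF f_nonneg q] by auto
  then have "lowf f / f q \<in> {0..1}"
    using f_nonneg[of q] by (cases "f q = 0") auto
  then show ?thesis
    using \<eta> mult_le_one[of \<eta> "lowf f / f q"] mult_nonneg_nonneg[of \<eta> "lowf f / f q"] by auto
qed

lemma lowf_le_one:
  fixes Q :: "'a \<Rightarrow> real"
  assumes M: "prob_space M"
    and Q: "distributed M lborel Q (\<lambda>q. ennreal (f q) * indicator {0..1} q)"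
    and f_nonneg: "\<And>q. f q \<ge> 0"
  shows "lowf f \<le> 1"
proof -
  interpret prob_space M by (rule M)
  have "(\<integral>q::real\<in>{0..1}. lowf f \<partial>lborel) \<le> (\<integral>q\<in>{0..1}. f q \<partial>lborel)"
    using lowf_le[of f, OF f_nonneg]
    by (intro set_integral_mono set_integrable_distributed_on_set[OF finite_measure Q f_nonneg])
      (auto simp: set_integrable_def)
  also have "\<dots> = measure M {\<omega> \<in> space M. Q \<omega> \<in> UNIV}"
    using measure_distributed_on_set[OF Q f_nonneg, of UNIV] by simp
  also have "\<dots> = 1"
    by (simp add: prob_space)
  finally show ?thesis
    by (simp add: set_integral_const)
qed

lemma borel_measurable_lowf_weight:
  fixes Q :: "'a \<Rightarrow> real"
  assumes Q_density: "distributed M lborel Q (\<lambda>q. ennreal (f q) * indicator {0..1} q)"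
    and f_nonneg: "\<And>q. f q \<ge> 0" and Q_range: "\<And>\<omega>. \<omega> \<in> space M \<Longrightarrow> Q \<omega> \<in> {0..1}"
  shows "(\<lambda>\<omega>. c * lowf f / f (Q \<omega>)) \<in> borel_measurable M"
proof -
  define F where "F q = f q * indicator {0..1} q" for q
  have [measurable]: "F \<in> borel_measurable borel"
    unfolding F_def by (rule borel_measurable_distributed_on_set[OF Q_density f_nonneg])
  have [measurable]: "Q \<in> borel_measurable M"
    using distributed_measurable[OF Q_density] by simp
  have "(\<lambda>\<omega>. c * lowf f / F (Q \<omega>)) \<in> borel_measurable M"
    by measurable
  then show ?thesis
    by (rule measurable_cong[THEN iffD1, rotated]) (use Q_range in \<open>auto simp: F_def\<close>)
qed

lemma integral_lowf_weight_event:
  fixes Q :: "'a \<Rightarrow> real" and f G :: "real \<Rightarrow> real"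
  assumes M: "prob_space M" and A: "A \<in> sets M" and Q_rv: "Q \<in> borel_measurable M"
    and Q_range: "\<And>\<omega>. \<omega> \<in> space M \<Longrightarrow> Q \<omega> \<in> {0..1}"
    and f_nonneg: "\<And>q. f q \<ge> 0"
    and Q_density: "distributed M lborel Q (\<lambda>q. ennreal (f q) * indicator {0..1} q)"
    and G[measurable]: "G \<in> borel_measurable borel" and G_range: "\<And>q. G q \<in> {0..1}"
    and event_density: "\<And>B. B \<in> sets borel \<Longrightarrow>
      measure M {\<omega> \<in> space M. \<omega> \<in> A \<and> Q \<omega> \<in> B} = (\<integral>q\<in>B \<inter> {0..1}. G q * f q \<partial>lborel)"
  shows "(\<integral>\<omega>. indicator A \<omega> * (c * lowf f / f (Q \<omega>)) \<partial>M)
    = c * lowf f * (\<integral>q\<in>{0..1}. G q \<partial>lborel)"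
proof -
  interpret prob_space M by (rule M)
  define F where "F q = f q * indicator {0..1} q" for q
  have F[measurable]: "F \<in> borel_measurable borel"
    unfolding F_def by (rule borel_measurable_distributed_on_set[OF Q_density f_nonneg])
  have F_int: "integrable lborel F"
    using set_integrable_distributed_on_set[OF finite_measure Q_density f_nonneg]
    unfolding F_def[abs_def] set_integrable_def by (simp add: mult.commute)
  have GF_int: "integrable lborel (\<lambda>q. G q * F q)"
    using G_range f_nonneg by (intro Bochner_Integration.integrable_bound[OF F_int] AE_I2)
      (measurable, auto simp: F_def abs_mult mult_left_le_one_le split: split_indicator)
  have GF_nonneg: "G q * F q \<ge> 0" for q
    using G_range[of q] f_nonneg[of q] by (simp add: F_def)
  have "(\<integral>\<omega>. indicator A \<omega> * (c * lowf f / f (Q \<omega>)) \<partial>M)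
      = (\<integral>\<omega>. indicator A \<omega> * (c * lowf f / F (Q \<omega>)) \<partial>M)"
    using Q_range by (intro Bochner_Integration.integral_cong) (auto simp: F_def)
  also have "\<dots> = (\<integral>q. G q * F q * (c * lowf f / F q) \<partial>lborel)"
  proof (rule integral_event_density[OF finite_measure A Q_rv _ GF_nonneg GF_int])
    fix B :: "real set" assume B: "B \<in> sets borel"
    have "(\<integral>q\<in>B \<inter> {0..1}. G q * f q \<partial>lborel) = (\<integral>q\<in>B. G q * F q \<partial>lborel)"
      unfolding set_lebesgue_integral_def
      by (intro Bochner_Integration.integral_cong) (auto simp: F_def split: split_indicator)
    then show "measure M {\<omega> \<in> space M. \<omega> \<in> A \<and> Q \<omega> \<in> B} = (\<integral>q\<in>B. G q * F q \<partial>lborel)"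
      using event_density[OF B] by simp
  qed (measurable, measurable)
  also have "\<dots> = (\<integral>q. c * lowf f * (indicator {0..1} q * G q) \<partial>lborel)"
  proof (rule Bochner_Integration.integral_cong)
    fix q :: real
    have "F q * (c * lowf f / F q) = c * lowf f * indicator {0..1} q"
      using mult_lowf_weight[of f q c, OF f_nonneg] by (cases "q \<in> {0..1}") (simp_all add: F_def)
    then show "G q * F q * (c * lowf f / F q) = c * lowf f * (indicator {0..1} q * G q)"
      by (metis mult.commute mult.left_commute)
  qed simp
  also have "\<dots> = c * lowf f * (\<integral>q\<in>{0..1}. G q \<partial>lborel)"
    by (simp add: set_lebesgue_integral_def)
  finally show ?thesis .
qed

lemma integral_lowf_weight_Q_le:
  fixes Q :: "'a \<Rightarrow> real"
  assumes M: "prob_space M" and Q_rv: "Q \<in> borel_measurable M"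
    and Q_range: "\<And>\<omega>. \<omega> \<in> space M \<Longrightarrow> Q \<omega> \<in> {0..1}"
    and f_nonneg: "\<And>q. f q \<ge> 0"
    and Q_density: "distributed M lborel Q (\<lambda>q. ennreal (f q) * indicator {0..1} q)"
    and s: "s \<in> {0..1}"
  shows "(\<integral>\<omega>. indicator {\<omega> \<in> space M. Q \<omega> \<le> s} \<omega> * (c * lowf f / f (Q \<omega>)) \<partial>M) = c * lowf f * s"
proof -
  interpret prob_space M by (rule M)
  have "(\<integral>\<omega>. indicator {\<omega> \<in> space M. Q \<omega> \<le> s} \<omega> * (c * lowf f / f (Q \<omega>)) \<partial>M)
      = c * lowf f * (\<integral>q\<in>{0..1}. indicator {..s} q \<partial>lborel)"
  proof (rule integral_lowf_weight_event[OF M _ Q_rv Q_range f_nonneg Q_density])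
    fix B :: "real set" assume [measurable]: "B \<in> sets borel"
    have "measure M {\<omega> \<in> space M. \<omega> \<in> {\<omega> \<in> space M. Q \<omega> \<le> s} \<and> Q \<omega> \<in> B}
        = measure M {\<omega> \<in> space M. Q \<omega> \<in> {..s} \<inter> B}"
      by (rule arg_cong[where f = "measure M"]) auto
    also have "\<dots> = (\<integral>q\<in>({..s} \<inter> B) \<inter> {0..1}. f q \<partial>lborel)"
      by (rule measure_distributed_on_set[OF Q_density f_nonneg]) simp
    also have "\<dots> = (\<integral>q\<in>B \<inter> {0..1}. indicator {..s} q * f q \<partial>lborel)"
      unfolding set_lebesgue_integral_def
      by (intro Bochner_Integration.integral_cong) (auto split: split_indicator)
    finally show "measure M {\<omega> \<in> space M. \<omega> \<in> {\<omega> \<in> space M. Q \<omega> \<le> s} \<and> Q \<omega> \<in> B}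
        = (\<integral>q\<in>B \<inter> {0..1}. indicator {..s} q * f q \<partial>lborel)" .
  qed (use Q_rv in auto)
  also have "(\<integral>q\<in>{0..1}. indicator {..s} q \<partial>lborel) = s"
    using s by (simp add: set_lebesgue_integral_def indicator_inter_arith[symmetric] Int_commute)
  finally show ?thesis .
qed

lemma integral_lowf_weight_indep:
  fixes P Q :: "'a \<Rightarrow> real"
  assumes M: "prob_space M" and P_rv: "P \<in> borel_measurable M" and Q_rv: "Q \<in> borel_measurable M"
    and Q_range: "\<And>\<omega>. \<omega> \<in> space M \<Longrightarrow> Q \<omega> \<in> {0..1}"
    and f_nonneg: "\<And>q. f q \<ge> 0"
    and Q_density: "distributed M lborel Q (\<lambda>q. ennreal (f q) * indicator {0..1} q)"
    and indep: "prob_space.indep_var M borel P borel Q"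
  shows "(\<integral>\<omega>. indicator {\<omega> \<in> space M. P \<omega> \<le> s} \<omega> * (c * lowf f / f (Q \<omega>)) \<partial>M)
    = c * lowf f * measure M {\<omega> \<in> space M. P \<omega> \<le> s}"
proof -
  interpret prob_space M by (rule M)
  let ?p = "measure M {\<omega> \<in> space M. P \<omega> \<le> s}"
  have "(\<integral>\<omega>. indicator {\<omega> \<in> space M. P \<omega> \<le> s} \<omega> * (c * lowf f / f (Q \<omega>)) \<partial>M)
      = c * lowf f * (\<integral>q::real\<in>{0..1}. ?p \<partial>lborel)"
  proof (rule integral_lowf_weight_event[OF M _ Q_rv Q_range f_nonneg Q_density])
    fix B :: "real set" assume B: "B \<in> sets borel"
    have "measure M {\<omega> \<in> space M. \<omega> \<in> {\<omega> \<in> space M. P \<omega> \<le> s} \<and> Q \<omega> \<in> B}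
        = ?p * measure M {\<omega> \<in> space M. Q \<omega> \<in> B}"
      using prob_indep_var_conj[OF indep _ B, of "{..s}"] by simp
    also have "\<dots> = (\<integral>q\<in>B \<inter> {0..1}. ?p * f q \<partial>lborel)"
      by (simp add: measure_distributed_on_set[OF Q_density f_nonneg B])
    finally show "measure M {\<omega> \<in> space M. \<omega> \<in> {\<omega> \<in> space M. P \<omega> \<le> s} \<and> Q \<omega> \<in> B}
        = (\<integral>q\<in>B \<inter> {0..1}. ?p * f q \<partial>lborel)" .
  qed (use P_rv in auto)
  then show ?thesis
    by (simp add: set_integral_const)
qed

theorem proposition3:
  fixes M :: "'a measure"
    and P Q T :: "'a \<Rightarrow> real"
    and f :: "real \<Rightarrow> real"
    and g :: "real \<Rightarrow> real \<Rightarrow> real"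
    and \<eta> :: real
  assumes M: "prob_space M"
    and P_rv: "P \<in> borel_measurable M" and Q_rv: "Q \<in> borel_measurable M"
    and T_rv: "T \<in> borel_measurable M"
    and P_range: "\<And>\<omega>. \<omega> \<in> space M \<Longrightarrow> P \<omega> \<in> {0..1}"
    and Q_range: "\<And>\<omega>. \<omega> \<in> space M \<Longrightarrow> Q \<omega> \<in> {0..1}"
    and T_range: "\<And>\<omega>. \<omega> \<in> space M \<Longrightarrow> T \<omega> \<in> {0, 1}"
    and P_valid: "\<And>s. s \<in> {0..1} \<Longrightarrow>
        measure M {\<omega> \<in> space M. P \<omega> \<le> s} \<le> s"
    and f_nonneg: "\<And>q. f q \<ge> 0"
    and Q_density: "distributed M lborel Q (\<lambda>q. ennreal (f q) * indicator {0..1} q)"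
    and eta: "\<eta> \<in> {0..1}"
    and T_cond: "\<And>C. C \<in> sets (borel :: (real \<times> real) measure) \<Longrightarrow>
        measure M {\<omega> \<in> space M. T \<omega> = 1 \<and> (Q \<omega>, P \<omega>) \<in> C}
        = prob_space.expectation M
            (\<lambda>\<omega>. (1 - \<eta> * lowf f / f (Q \<omega>)) * indicator C (Q \<omega>, P \<omega>))"
    and g_meas: "\<And>s. g s \<in> borel_measurable borel"
    and g_range: "\<And>s q. g s q \<in> {0..1}"
    and g_cond: "\<And>s B. B \<in> sets borel \<Longrightarrow>
        measure M {\<omega> \<in> space M. P \<omega> \<le> s \<and> Q \<omega> \<in> B}
        = (\<integral>q\<in>B \<inter> {0..1}. g s q * f q \<partial>lborel)"
  shows "(\<forall>s\<in>{0..1}.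
            measure M {\<omega> \<in> space M. T \<omega> * P \<omega> + (1 - T \<omega>) * Q \<omega> \<le> s}
            = measure M {\<omega> \<in> space M. P \<omega> \<le> s}
              + \<eta> * lowf f * (s - (\<integral>q\<in>{0..1}. g s q \<partial>lborel)))
       \<and> (prob_space.indep_var M borel P borel Q \<longrightarrow>
            (\<forall>s\<in>{0..1}.
               measure M {\<omega> \<in> space M. T \<omega> * P \<omega> + (1 - T \<omega>) * Q \<omega> \<le> s} \<le> s)
          \<and> ((\<forall>s\<in>{0..1}. measure M {\<omega> \<in> space M. P \<omega> \<le> s} = s) \<longrightarrow>
               (\<forall>s\<in>{0..1}.
                  measure M {\<omega> \<in> space M. T \<omega> * P \<omega> + (1 - T \<omega>) * Q \<omega> \<le> s} = s)))"
proof -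
  interpret prob_space M by (rule M)
  let ?k = "\<eta> * lowf f" and ?w = "\<lambda>\<omega>. \<eta> * lowf f / f (Q \<omega>)"
  let ?F = "\<lambda>s. measure M {\<omega> \<in> space M. P \<omega> \<le> s}"
    and ?G = "\<lambda>s. measure M {\<omega> \<in> space M. T \<omega> * P \<omega> + (1 - T \<omega>) * Q \<omega> \<le> s}"
  have cdf: "?G s = ?F s + (\<integral>\<omega>. indicator {\<omega> \<in> space M. Q \<omega> \<le> s} \<omega> * ?w \<omega> \<partial>M)
      - (\<integral>\<omega>. indicator {\<omega> \<in> space M. P \<omega> \<le> s} \<omega> * ?w \<omega> \<partial>M)" for s
    using lowf_weight_range[of f, OF f_nonneg Q_range eta]
    by (intro measure_randomized_mixture_le[OF M P_rv Q_rv T_rv T_range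
          borel_measurable_lowf_weight[OF Q_density f_nonneg Q_range] _ T_cond]) auto
  have weight_Q: "(\<integral>\<omega>. indicator {\<omega> \<in> space M. Q \<omega> \<le> s} \<omega> * ?w \<omega> \<partial>M) = ?k * s"
    if "s \<in> {0..1}" for s
    by (rule integral_lowf_weight_Q_le[OF M Q_rv Q_range f_nonneg Q_density that])
  have weight_P: "(\<integral>\<omega>. indicator {\<omega> \<in> space M. P \<omega> \<le> s} \<omega> * ?w \<omega> \<partial>M)
      = ?k * (\<integral>q\<in>{0..1}. g s q \<partial>lborel)" for s
    using g_cond g_meas g_range P_rv
    by (intro integral_lowf_weight_event[OF M _ Q_rv Q_range f_nonneg Q_density]) auto
  have k: "0 \<le> ?k" "?k \<le> 1"
    using eta lowf_nonneg[of f, OF f_nonneg] lowf_le_one[OF M Q_density f_nonneg]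
    by (auto intro: mult_le_one)
  have indep_cdf: "?G s = ?F s + ?k * (s - ?F s)"
    if "indep_var borel P borel Q" and "s \<in> {0..1}" for s
    using cdf[of s] weight_Q[OF that(2)]
      integral_lowf_weight_indep[OF M P_rv Q_rv Q_range f_nonneg Q_density that(1)]
    by (simp add: algebra_simps)
  show ?thesis
  proof (intro conjI impI ballI)
    fix s :: real assume "s \<in> {0..1}"
    then show "?G s = ?F s + ?k * (s - (\<integral>q\<in>{0..1}. g s q \<partial>lborel))"
      using cdf[of s] weight_Q weight_P[of s] by (simp add: algebra_simps)
  next
    fix s :: real assume "indep_var borel P borel Q" and s: "s \<in> {0..1}"
    then show "?G s \<le> s"
      using indep_cdf P_valid[OF s] k mult_left_le_one_le[of "s - ?F s" ?k] by simp
  next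
    fix s :: real assume "indep_var borel P borel Q" and "s \<in> {0..1}"
      and "\<forall>s\<in>{0..1}. ?F s = s"
    then show "?G s = s"
      using indep_cdf by simp
  qed
qed

end
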